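(* Let $G$ be a 3-regular graph on $n$ vertices and $k$ a positive integer. For every $\delta$ with $\frac{2\log2}{k}\le\delta<n$, let $\eta=\frac{n}{\sqrt{n+\delta}}$. If $x\in\mathbb{R}^n$ satisfies $\|x\|_2=1$ and $\|x\|_1\le\eta$, then $p_G(x)\le\mathrm{MaxCut}(G)\le\mathrm{Opt}(G)$. Consequently, with $\mathcal{T}_\delta=\{x\in\mathbb{R}^n:\|x\|_2=1,\ \|x\|_1\ge\eta\}$, one has $\mathrm{Opt}(G)=\max_{x\in\mathcal{T}_\delta}p_G(x)$.
   Context: Let $A$ be the adjacency matrix of $G$ and $Q_G=\frac12\big(I-\frac13A\big)$. Define $\mathrm{MaxCut}(G)=\max_{x\in\{\pm1/\sqrt n\}^n}x^TQ_Gx$, $p_G(x)=(x^TQ_Gx)\prod_{i=1}^n(nx_i^2)^k$ for $x\in\mathbb{R}^n$, and $\mathrm{Opt}(G)=\max_{\|x\|_2=1}p_G(x)$. *)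

theory Defs
  imports "HOL-Analysis.Analysis"
begin

text \<open>A finite simple graph on the vertex type 'n (n = CARD('n)) is given by a
symmetric irreflexive edge relation E.\<close>

definition simple_graph :: "('n \<Rightarrow> 'n \<Rightarrow> bool) \<Rightarrow> bool" where
  "simple_graph E \<longleftrightarrow> (\<forall>i j. E i j \<longleftrightarrow> E j i) \<and> (\<forall>i. \<not> E i i)"

definition regular_graph :: "nat \<Rightarrow> ('n::finite \<Rightarrow> 'n \<Rightarrow> bool) \<Rightarrow> bool" where
  "regular_graph d E \<longleftrightarrow> simple_graph E \<and> (\<forall>i. card {j. E i j} = d)"

definition adj_matrix :: "('n::finite \<Rightarrow> 'n \<Rightarrow> bool) \<Rightarrow> real^'n^'n" where
  "adj_matrix E = (\<chi> i j. if E i j then 1 else 0)"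

definition QG :: "('n::finite \<Rightarrow> 'n \<Rightarrow> bool) \<Rightarrow> real^'n^'n" where
  "QG E = (1/2) *\<^sub>R (mat 1 - (1/3) *\<^sub>R adj_matrix E)"

definition quad_form :: "real^'n^'n \<Rightarrow> real^'n \<Rightarrow> real" where
  "quad_form Q x = x \<bullet> (Q *v x)"

definition MaxCut :: "('n::finite \<Rightarrow> 'n \<Rightarrow> bool) \<Rightarrow> real" where
  "MaxCut E = Max ((\<lambda>x. quad_form (QG E) x) `
      {x :: real^'n. \<forall>i. x $ i = 1 / sqrt (CARD('n)) \<or> x $ i = - 1 / sqrt (CARD('n))})"

definition pG :: "('n::finite \<Rightarrow> 'n \<Rightarrow> bool) \<Rightarrow> nat \<Rightarrow> real^'n \<Rightarrow> real" where
  "pG E k x = quad_form (QG E) x * (\<Prod>i\<in>UNIV. (real CARD('n) * (x $ i)^2) ^ k)"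

definition Opt :: "('n::finite \<Rightarrow> 'n \<Rightarrow> bool) \<Rightarrow> nat \<Rightarrow> real" where
  "Opt E k = (SUP x \<in> {x :: real^'n. norm x = 1}. pG E k x)"

definition l1norm :: "real^'n::finite \<Rightarrow> real" where
  "l1norm x = (\<Sum>i\<in>UNIV. \<bar>x $ i\<bar>)"

end

theory Submission
  imports Defs
begin

(* Cut vectors (all entries +-1/sqrt n) are unit vectors on which the product factor of pG is 1,
   so pG agrees there with the MaxCut objective, giving MaxCut <= Opt; their l1-norm is
   sqrt n >= eta.  For a 3-regular graph x' A x >= -3 |x|^2, so the quadratic form is at most 1
   on the sphere, while MaxCut >= 1/2 because a maximal cut is locally optimal.  If ||x||_1 <= eta,
   AM-GM and Bernoulli's inequality give prod (n x_i^2)^k <= 1/(1 + k delta) <= 1/2, hence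
   pG x <= 1/2 <= MaxCut.  So a maximiser of pG on the sphere either lies in T_delta already or
   can be replaced by a maximal cut vector. *)

lemma quad_form_eq_sum: "quad_form Q x = (\<Sum>i\<in>UNIV. \<Sum>j\<in>UNIV. x$i * Q$i$j * x$j)"
  by (simp add: quad_form_def inner_vec_def matrix_vector_mult_def sum_distrib_left mult.assoc)

lemma quad_form_QG: "quad_form (QG E) x = (x \<bullet> x) / 2 - quad_form (adj_matrix E) x / 6"
proof -
  have "QG E *v x = (1/2) *\<^sub>R x - (1/6) *\<^sub>R (adj_matrix E *v x)"
    by (simp add: QG_def scaleR_matrix_vector_assoc[symmetric] matrix_vector_mult_diff_rdistrib
        scaleR_diff_right)
  then show ?thesis
    by (simp add: quad_form_def inner_diff_right)
qed

lemma continuous_on_pG: "continuous_on S (pG E k)"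
  unfolding pG_def quad_form_def by (intro continuous_intros)

lemma quad_form_adj_matrix:
  "quad_form (adj_matrix E) x = (\<Sum>i\<in>UNIV. \<Sum>j\<in>UNIV. if E i j then x$i * x$j else 0)"
  unfolding quad_form_eq_sum adj_matrix_def by (intro sum.cong) auto

lemma sum_over_edges_left:
  fixes f :: "'n::finite \<Rightarrow> real"
  assumes "regular_graph d E"
  shows "(\<Sum>i\<in>UNIV. \<Sum>j\<in>UNIV. if E i j then f i else 0) = real d * sum f UNIV"
proof -
  have "(\<Sum>j\<in>UNIV. if E i j then f i else 0) = real d * f i" for i
    using assms sum.inter_filter[of UNIV "\<lambda>_. f i" "E i"]
    by (simp add: regular_graph_def)
  then show ?thesis
    by (simp add: sum_distrib_left)
qed

lemma sum_over_edges_right: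
  fixes f :: "'n::finite \<Rightarrow> real"
  assumes "regular_graph d E"
  shows "(\<Sum>i\<in>UNIV. \<Sum>j\<in>UNIV. if E i j then f j else 0) = real d * sum f UNIV"
proof -
  have "E i j = E j i" for i j
    using assms by (simp add: regular_graph_def simple_graph_def)
  then have "(\<Sum>i\<in>UNIV. \<Sum>j\<in>UNIV. if E i j then f j else 0)
      = (\<Sum>j\<in>UNIV. \<Sum>i\<in>UNIV. if E j i then f j else 0)"
    by (subst sum.swap) simp
  also have "\<dots> = real d * sum f UNIV"
    by (rule sum_over_edges_left[OF assms])
  finally show ?thesis .
qed

lemma quad_form_adj_matrix_ge:
  assumes "regular_graph d E"
  shows "- real d * (x \<bullet> x) \<le> quad_form (adj_matrix E) x"
proof -
  let ?e = "\<lambda>i j t. if E i j then t else (0::real)"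
  have "0 \<le> (\<Sum>i\<in>UNIV. \<Sum>j\<in>UNIV. ?e i j ((x$i + x$j)^2))"
    by (intro sum_nonneg) simp
  also have "\<dots> = (\<Sum>i\<in>UNIV. \<Sum>j\<in>UNIV. ?e i j ((x$i)^2))
      + (\<Sum>i\<in>UNIV. \<Sum>j\<in>UNIV. ?e i j ((x$j)^2))
      + 2 * (\<Sum>i\<in>UNIV. \<Sum>j\<in>UNIV. ?e i j (x$i * x$j))"
  proof -
    have "?e i j ((x$i + x$j)^2) = ?e i j ((x$i)^2) + ?e i j ((x$j)^2) + 2 * ?e i j (x$i * x$j)"
      for i j
      by (simp add: power2_sum)
    then show ?thesis
      by (simp only: sum.distrib sum_distrib_left)
  qed
  also have "\<dots> = 2 * real d * (x \<bullet> x) + 2 * quad_form (adj_matrix E) x"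
    by (simp add: sum_over_edges_left[OF assms] sum_over_edges_right[OF assms]
        quad_form_adj_matrix inner_vec_def power2_eq_square)
  finally show ?thesis
    by simp
qed

lemma quad_form_QG_le:
  assumes "regular_graph 3 E"
  shows "quad_form (QG E) x \<le> x \<bullet> x"
  using quad_form_adj_matrix_ge[OF assms, of x] inner_ge_zero[of x]
  by (simp add: quad_form_QG)

definition flip_sign :: "'n::finite \<Rightarrow> real^'n \<Rightarrow> real^'n" where
  "flip_sign i x = (\<chi> j. if j = i then - x$j else x$j)"

lemma quad_form_flip_sign:
  fixes A :: "real^'n::finite^'n"
  assumes "\<And>i j. A$i$j = A$j$i" and "\<And>i. A$i$i = 0"
  shows "quad_form A (flip_sign i x) = quad_form A x - 4 * x$i * (A *v x)$i"
proof -
  let ?y = "flip_sign i x"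
  have entry: "x$a * A$a$b * x$b = ?y$a * A$a$b * ?y$b
      + (if a = i then 2 * (x$i * A$i$b * x$b) else 0)
      + (if b = i then 2 * (x$i * A$i$a * x$a) else 0)" for a b
    using assms by (cases "a = i"; cases "b = i") (simp_all add: flip_sign_def)
  have "quad_form A x = quad_form A ?y
      + (\<Sum>a\<in>UNIV. \<Sum>b\<in>UNIV. if a = i then 2 * (x$i * A$i$b * x$b) else 0)
      + (\<Sum>a\<in>UNIV. \<Sum>b\<in>UNIV. if b = i then 2 * (x$i * A$i$a * x$a) else 0)"
    unfolding quad_form_eq_sum sum.distrib[symmetric] by (intro sum.cong refl entry)
  also have "\<dots> = quad_form A ?y + 4 * (x$i * (A *v x)$i)"
    by (subst sum.swap) (simp add: sum.delta sum.delta' matrix_vector_mult_def sum_distrib_left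
        mult.assoc)
  finally show ?thesis
    by simp
qed

definition cut_vectors :: "(real^'n::finite) set" where
  "cut_vectors = {x. \<forall>i. x$i = 1 / sqrt CARD('n) \<or> x$i = - 1 / sqrt CARD('n)}"

lemma MaxCut_eq_Max_cut_vectors: "MaxCut E = Max (quad_form (QG E) ` cut_vectors)"
  unfolding MaxCut_def cut_vectors_def ..

lemma finite_cut_vectors: "finite (cut_vectors :: (real^'n::finite) set)"
proof -
  let ?a = "1 / sqrt CARD('n)" and ?b = "- 1 / sqrt CARD('n)"
  have "(cut_vectors :: (real^'n) set) \<subseteq> vec_lambda ` (UNIV \<rightarrow>\<^sub>E {?a, ?b})"
  proof
    fix x :: "real^'n"
    assume "x \<in> cut_vectors"
    then have "vec_nth x \<in> UNIV \<rightarrow>\<^sub>E {?a, ?b}"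
      by (auto simp: cut_vectors_def)
    then show "x \<in> vec_lambda ` (UNIV \<rightarrow>\<^sub>E {?a, ?b})"
      by (metis image_eqI vec_nth_inverse)
  qed
  moreover have "finite (vec_lambda ` (UNIV \<rightarrow>\<^sub>E {?a, ?b}))"
    by (simp add: finite_PiE)
  ultimately show ?thesis
    by (rule finite_subset)
qed

lemma const_in_cut_vectors: "(\<chi> i. 1 / sqrt CARD('n)) \<in> (cut_vectors :: (real^'n::finite) set)"
  by (simp add: cut_vectors_def)

lemma flip_sign_in_cut_vectors: "x \<in> cut_vectors \<Longrightarrow> flip_sign i x \<in> cut_vectors"
  by (auto simp: cut_vectors_def flip_sign_def)

lemma abs_cut_vector: "x \<in> cut_vectors \<Longrightarrow> \<bar>x$i\<bar> = 1 / sqrt CARD('n)"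
  for x :: "real^'n::finite"
proof -
  assume "x \<in> cut_vectors"
  then have "x$i = 1 / sqrt CARD('n) \<or> x$i = - (1 / sqrt CARD('n))"
    by (simp add: cut_vectors_def)
  then show ?thesis
    by (elim disjE) simp_all
qed

lemma cut_vector_sq: "x \<in> cut_vectors \<Longrightarrow> (x$i)^2 = 1 / real CARD('n)"
  for x :: "real^'n::finite"
proof -
  assume "x \<in> cut_vectors"
  then have "(x$i)^2 = (1 / sqrt CARD('n))^2"
    by (metis abs_cut_vector power2_abs)
  then show ?thesis
    by (simp add: power_divide)
qed

lemma inner_self_cut_vector: "x \<in> cut_vectors \<Longrightarrow> x \<bullet> x = 1"
  for x :: "real^'n::finite"
  by (simp add: inner_vec_def cut_vector_sq flip: power2_eq_square)

lemma norm_cut_vector: "x \<in> cut_vectors \<Longrightarrow> norm x = 1"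
  by (simp add: norm_eq_sqrt_inner inner_self_cut_vector)

lemma l1norm_cut_vector: "x \<in> cut_vectors \<Longrightarrow> l1norm x = sqrt CARD('n)"
  for x :: "real^'n::finite"
  by (simp add: l1norm_def abs_cut_vector real_div_sqrt)

lemma l1norm_cut_vector_ge:
  fixes s :: "real^'n::finite"
  assumes "0 \<le> \<delta>" and "s \<in> cut_vectors"
  shows "real CARD('n) / sqrt (real CARD('n) + \<delta>) \<le> l1norm s"
proof -
  have "real CARD('n) / sqrt (real CARD('n) + \<delta>) \<le> real CARD('n) / sqrt CARD('n)"
    using assms(1) by (intro divide_left_mono mult_pos_pos) (simp_all add: add_pos_nonneg)
  then show ?thesis
    by (simp add: l1norm_cut_vector[OF assms(2)] real_div_sqrt)
qed

lemma pG_cut_vector: "x \<in> cut_vectors \<Longrightarrow> pG E k x = quad_form (QG E) x"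
  by (simp add: pG_def cut_vector_sq)

lemma MaxCut_attained:
  obtains s where "s \<in> cut_vectors" and "quad_form (QG E) s = MaxCut E"
proof -
  have "MaxCut E \<in> quad_form (QG E) ` cut_vectors"
    unfolding MaxCut_eq_Max_cut_vectors
    using const_in_cut_vectors by (intro Max_in finite_imageI finite_cut_vectors) blast+
  then obtain s where "s \<in> cut_vectors" and "MaxCut E = quad_form (QG E) s"
    by (rule imageE)
  then show ?thesis
    by (intro that) simp_all
qed

lemma quad_form_le_MaxCut: "x \<in> cut_vectors \<Longrightarrow> quad_form (QG E) x \<le> MaxCut E"
  unfolding MaxCut_eq_Max_cut_vectors by (intro Max_ge finite_imageI finite_cut_vectors imageI)

lemma MaxCut_ge_half:
  assumes "simple_graph E"
  shows "1/2 \<le> MaxCut E"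
proof -
  let ?A = "adj_matrix E"
  obtain s where s: "s \<in> cut_vectors" and max: "quad_form (QG E) s = MaxCut E"
    by (rule MaxCut_attained)
  have QG_cut: "quad_form (QG E) y = 1/2 - quad_form ?A y / 6" if "y \<in> cut_vectors" for y
    using that by (simp add: quad_form_QG inner_self_cut_vector)
  have local_opt: "s$i * (?A *v s)$i \<le> 0" for i
  proof -
    have "quad_form (QG E) (flip_sign i s) \<le> quad_form (QG E) s"
      using quad_form_le_MaxCut[OF flip_sign_in_cut_vectors[OF s]] max by simp
    moreover have "quad_form ?A (flip_sign i s) = quad_form ?A s - 4 * s$i * (?A *v s)$i"
      using assms by (intro quad_form_flip_sign) (auto simp: adj_matrix_def simple_graph_def)
    ultimately show ?thesis
      using QG_cut s flip_sign_in_cut_vectors[OF s] by simp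
  qed
  have "quad_form ?A s \<le> 0"
    unfolding quad_form_def inner_vec_def by (simp add: local_opt sum_nonpos)
  then show ?thesis
    using QG_cut[OF s] max by simp
qed

lemma prod_le_mean_power:
  fixes x :: "'a \<Rightarrow> real"
  assumes "finite S" "S \<noteq> {}" and "\<And>i. i \<in> S \<Longrightarrow> 0 \<le> x i"
  shows "prod x S \<le> (sum x S / card S) ^ card S"
proof -
  have card: "0 < card S"
    using assms(1,2) by (simp add: card_gt_0_iff)
  have "prod x S = root (card S) (prod x S) ^ card S"
    using card assms(3) by (simp add: prod_nonneg)
  also have "\<dots> = (prod x S powr (1 / card S)) ^ card S"
    using card assms(3) by (simp add: root_powr_inverse prod_nonneg)
  also have "\<dots> \<le> (sum x S / card S) ^ card S"
    using arith_geom_mean[OF assms] by (intro power_mono) (simp_all add: sum_divide_distrib)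
  finally show ?thesis .
qed

lemma prod_scaled_sq_le:
  fixes x :: "real^'n::finite"
  defines "N \<equiv> real CARD('n)"
  assumes "0 \<le> \<delta>" and "l1norm x \<le> N / sqrt (N + \<delta>)"
  shows "(\<Prod>i\<in>UNIV. N * (x$i)^2) \<le> 1 / (1 + \<delta>)"
proof -
  have N: "0 < N"
    by (simp add: N_def)
  have "(\<Prod>i\<in>UNIV. N * (x$i)^2) = N ^ CARD('n) * (\<Prod>i\<in>UNIV. \<bar>x$i\<bar>)^2"
    by (simp add: N_def prod.distrib flip: prod_power_distrib) (metis abs_prod power2_abs)
  also have "\<dots> \<le> N ^ CARD('n) * ((l1norm x / N) ^ CARD('n))^2"
    using prod_le_mean_power[of UNIV "\<lambda>i. \<bar>x$i\<bar>"]
    by (intro mult_left_mono power_mono) (simp_all add: prod_nonneg l1norm_def N_def)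
  also have "\<dots> = (N * (l1norm x / N)^2) ^ CARD('n)"
    by (metis power_mult mult.commute power_mult_distrib)
  also have "\<dots> = ((l1norm x)^2 / N) ^ CARD('n)"
    using N by (simp add: power2_eq_square)
  also have "\<dots> \<le> ((N / sqrt (N + \<delta>))^2 / N) ^ CARD('n)"
    using assms(3) N by (intro power_mono divide_right_mono) (auto simp: l1norm_def sum_nonneg)
  also have "(N / sqrt (N + \<delta>))^2 / N = 1 / (1 + \<delta> / N)"
  proof -
    have "0 < N + \<delta>"
      using N assms(2) by simp
    then have "(N / sqrt (N + \<delta>))^2 / N = N / (N + \<delta>)"
      using N by (simp add: power_divide power2_eq_square)
    also have "\<dots> = 1 / (1 + \<delta> / N)"
      using N by (simp add: field_simps)
    finally show ?thesis .
  qed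
  also have "(1 / (1 + \<delta> / N)) ^ CARD('n) = 1 / (1 + \<delta> / N) ^ CARD('n)"
    by (simp add: power_divide)
  also have "\<dots> \<le> 1 / (1 + \<delta>)"
  proof -
    have "1 + real CARD('n) * (\<delta> / N) \<le> (1 + \<delta> / N) ^ CARD('n)"
      using N assms(2) by (intro Bernoulli_inequality) (smt (verit) divide_nonneg_pos)
    then show ?thesis
      using N assms(2) by (intro divide_left_mono) (simp_all add: N_def)
  qed
  finally show ?thesis .
qed

lemma prod_scaled_sq_pow_le_half:
  fixes x :: "real^'n::finite"
  defines "N \<equiv> real CARD('n)"
  assumes "0 < k" and "2 * ln 2 / real k \<le> \<delta>" and "l1norm x \<le> N / sqrt (N + \<delta>)"
  shows "(\<Prod>i\<in>UNIV. (N * (x$i)^2) ^ k) \<le> 1/2"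
proof -
  have k\<delta>: "1 \<le> real k * \<delta>"
    using assms(2,3) ln2_ge_two_thirds by (simp add: field_simps)
  have "0 \<le> 2 * ln 2 / real k"
    by simp
  then have \<delta>: "0 \<le> \<delta>"
    using assms(3) by linarith
  have "(\<Prod>i\<in>UNIV. (N * (x$i)^2) ^ k) = (\<Prod>i\<in>UNIV. N * (x$i)^2) ^ k"
    by (simp add: prod_power_distrib)
  also have "\<dots> \<le> (1 / (1 + \<delta>)) ^ k"
    using prod_scaled_sq_le[OF \<delta>] assms(4) by (intro power_mono) (simp_all add: N_def prod_nonneg)
  also have "\<dots> \<le> 1 / (1 + real k * \<delta>)"
    using Bernoulli_inequality[of \<delta> k] \<delta> k\<delta> by (simp add: power_divide divide_left_mono)
  also have "\<dots> \<le> 1/2"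
    using k\<delta> by simp
  finally show ?thesis .
qed

lemma pG_le_MaxCut:
  fixes x :: "real^'n::finite"
  defines "N \<equiv> real CARD('n)"
  assumes "regular_graph 3 E" and "0 < k" and "2 * ln 2 / real k \<le> \<delta>"
    and "norm x = 1" and "l1norm x \<le> N / sqrt (N + \<delta>)"
  shows "pG E k x \<le> MaxCut E"
proof -
  let ?P = "\<Prod>i\<in>UNIV. (N * (x$i)^2) ^ k"
  have "x \<bullet> x = 1"
    using assms(5) power2_norm_eq_inner[of x] by simp
  then have "quad_form (QG E) x \<le> 1"
    using quad_form_QG_le[OF assms(2), of x] by simp
  moreover have "0 \<le> ?P"
    by (intro prod_nonneg) (simp add: N_def)
  ultimately have "pG E k x \<le> ?P"
    unfolding pG_def N_def using mult_right_mono[of _ 1] by fastforce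
  also have "\<dots> \<le> 1/2"
    using prod_scaled_sq_pow_le_half[OF assms(3,4)] assms(6) unfolding N_def .
  also have "\<dots> \<le> MaxCut E"
    using assms(2) unfolding regular_graph_def by (blast intro: MaxCut_ge_half)
  finally show ?thesis .
qed

lemma Opt_attained:
  obtains x :: "real^'n::finite" where "norm x = 1" and "pG E k x = Opt E k"
    and "\<And>y. norm y = 1 \<Longrightarrow> pG E k y \<le> pG E k x"
proof -
  let ?S = "sphere (0 :: real^'n) 1"
  have "compact ?S" and "?S \<noteq> {}"
    by simp_all
  then obtain x where x: "x \<in> ?S" and max: "\<forall>y\<in>?S. pG E k y \<le> pG E k x"
    using continuous_attains_sup[OF _ _ continuous_on_pG] by metis
  have "Opt E k = pG E k x"
    unfolding Opt_def using x max by (intro cSup_eq_maximum) auto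
  with x max show ?thesis
    by (intro that) auto
qed

lemma MaxCut_le_Opt: "MaxCut E \<le> Opt E k"
proof -
  obtain s where s: "s \<in> cut_vectors" and "quad_form (QG E) s = MaxCut E"
    by (rule MaxCut_attained)
  then have "MaxCut E = pG E k s"
    by (simp add: pG_cut_vector)
  moreover obtain x where "norm x = 1" and "pG E k x = Opt E k"
    and "\<And>y. norm y = 1 \<Longrightarrow> pG E k y \<le> pG E k x"
    using Opt_attained[where E = E and k = k] by metis
  ultimately show ?thesis
    using norm_cut_vector[OF s] by simp
qed

theorem mainTheorem18:
  fixes E :: "'n::finite \<Rightarrow> 'n \<Rightarrow> bool" and k :: nat and \<delta> :: real
  assumes "regular_graph 3 E"
    and "k > 0"
    and "2 * ln 2 / real k \<le> \<delta>" and "\<delta> < real CARD('n)"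
  defines "\<eta> \<equiv> real CARD('n) / sqrt (real CARD('n) + \<delta>)"
  shows "(\<forall>x :: real^'n. norm x = 1 \<and> l1norm x \<le> \<eta> \<longrightarrow>
            pG E k x \<le> MaxCut E \<and> MaxCut E \<le> Opt E k)
     \<and> (\<exists>x\<in>{x :: real^'n. norm x = 1 \<and> l1norm x \<ge> \<eta>}. pG E k x = Opt E k
           \<and> (\<forall>y\<in>{x :: real^'n. norm x = 1 \<and> l1norm x \<ge> \<eta>}. pG E k y \<le> pG E k x))"
proof -
  have "0 \<le> 2 * ln 2 / real k"
    by simp
  then have \<delta>: "0 \<le> \<delta>"
    using assms(3) by linarith
  have below_MaxCut: "pG E k x \<le> MaxCut E" if "norm x = 1" "l1norm x \<le> \<eta>" for x :: "real^'n"
    using pG_le_MaxCut[OF assms(1-3) that[unfolded \<eta>_def]] .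
  obtain x :: "real^'n" where x: "norm x = 1" and Opt: "pG E k x = Opt E k"
    and max: "\<And>y. norm y = 1 \<Longrightarrow> pG E k y \<le> pG E k x"
    using Opt_attained[where E = E and k = k] by metis
  have "\<exists>z. norm z = 1 \<and> \<eta> \<le> l1norm z \<and> pG E k z = Opt E k"
  proof (cases "\<eta> \<le> l1norm x")
    case True
    with x Opt show ?thesis
      by blast
  next
    case False
    obtain s where s: "s \<in> cut_vectors" and "quad_form (QG E) s = MaxCut E"
      by (rule MaxCut_attained)
    then have "pG E k s = Opt E k"
      using below_MaxCut[OF x] False MaxCut_le_Opt[of E k] Opt by (simp add: pG_cut_vector)
    with s show ?thesis
      unfolding \<eta>_def using norm_cut_vector l1norm_cut_vector_ge[OF \<delta>] by blast
  qed
  then show ?thesis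
    using below_MaxCut MaxCut_le_Opt[of E k] max Opt by auto
qed

end
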